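(* Let $\mathbf A$ be a finite algebra with a strongly abelian congruence $\alpha$ and let $a,b\in A$ with $(a,b)\in\alpha$. Then $|F_{\mathbf A,ab}(n)|\in O(n^k)$ where $k=\lfloor\log_2|A|\rfloor$.
   Context: $\mathrm{Clo}_n(\mathbf A)$ is the set of $n$-ary term operations of $\mathbf A$, and $F_{\mathbf A,ab}(n)=\{t|_{\{a,b\}^n}\colon\{a,b\}^n\to A\mid t\in\mathrm{Clo}_n(\mathbf A)\}$. A congruence $\alpha$ of $\mathbf A$ is strongly abelian if for every $k\ge1$, every $t\in\mathrm{Clo}_k(\mathbf A)$ and all $x_1,\dots,x_k,y_1,\dots,y_k,z_2,\dots,z_k\in A$ with $(x_i,y_i)\in\alpha$ for $1\le i\le k$ and $(y_i,z_i)\in\alpha$ for $2\le i\le k$, $t(x_1,\dots,x_k)=t(y_1,\dots,y_k)$ implies $t(x_1,z_2,\dots,z_k)=t(y_1,z_2,\dots,z_k)$. *)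

theory Defs
  imports Complex_Main "HOL-Library.Landau_Symbols" "HOL-Library.FuncSet"
begin

definition is_algebra :: "'a set \<Rightarrow> ('f \<Rightarrow> nat) \<Rightarrow> ('f \<Rightarrow> 'a list \<Rightarrow> 'a) \<Rightarrow> bool" where
  "is_algebra A ar op \<longleftrightarrow> A \<noteq> {} \<and>
     (\<forall>f xs. length xs = ar f \<and> set xs \<subseteq> A \<longrightarrow> op f xs \<in> A)"

text \<open>n-ary term operations (as functions on argument lists; only their values on
  lists of length n over A matter).\<close>
inductive_set Clo :: "('f \<Rightarrow> nat) \<Rightarrow> ('f \<Rightarrow> 'a list \<Rightarrow> 'a) \<Rightarrow> nat \<Rightarrow> ('a list \<Rightarrow> 'a) set"
  for ar op n where
  proj: "i < n \<Longrightarrow> (\<lambda>xs. xs ! i) \<in> Clo ar op n"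
| comp: "length ts = ar f \<Longrightarrow> (\<forall>t\<in>set ts. t \<in> Clo ar op n)
          \<Longrightarrow> (\<lambda>xs. op f (map (\<lambda>t. t xs) ts)) \<in> Clo ar op n"

definition tuples :: "'a set \<Rightarrow> nat \<Rightarrow> 'a list set" where
  "tuples B n = {xs. length xs = n \<and> set xs \<subseteq> B}"

definition F_ab :: "('f \<Rightarrow> nat) \<Rightarrow> ('f \<Rightarrow> 'a list \<Rightarrow> 'a) \<Rightarrow> 'a \<Rightarrow> 'a \<Rightarrow> nat \<Rightarrow> ('a list \<Rightarrow> 'a) set" where
  "F_ab ar op a b n = (\<lambda>t. restrict t (tuples {a, b} n)) ` Clo ar op n"

definition is_congruence :: "'a set \<Rightarrow> ('f \<Rightarrow> nat) \<Rightarrow> ('f \<Rightarrow> 'a list \<Rightarrow> 'a) \<Rightarrow> ('a \<times> 'a) set \<Rightarrow> bool" where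
  "is_congruence A ar op \<alpha> \<longleftrightarrow> equiv A \<alpha> \<and>
     (\<forall>f xs ys. length xs = ar f \<and> length ys = ar f \<and> set xs \<subseteq> A \<and> set ys \<subseteq> A \<and>
        (\<forall>i < ar f. (xs ! i, ys ! i) \<in> \<alpha>) \<longrightarrow> (op f xs, op f ys) \<in> \<alpha>)"

definition strongly_abelian :: "'a set \<Rightarrow> ('f \<Rightarrow> nat) \<Rightarrow> ('f \<Rightarrow> 'a list \<Rightarrow> 'a) \<Rightarrow> ('a \<times> 'a) set \<Rightarrow> bool" where
  "strongly_abelian A ar op \<alpha> \<longleftrightarrow>
     (\<forall>k \<ge> 1. \<forall>t \<in> Clo ar op k. \<forall>xs ys zs.
        xs \<in> tuples A k \<and> ys \<in> tuples A k \<and> zs \<in> tuples A k \<and>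
        (\<forall>i < k. (xs ! i, ys ! i) \<in> \<alpha>) \<and>
        (\<forall>i. 1 \<le> i \<and> i < k \<longrightarrow> (ys ! i, zs ! i) \<in> \<alpha>) \<and>
        t xs = t ys \<longrightarrow> t (xs ! 0 # tl zs) = t (ys ! 0 # tl zs))"

end

theory Submission
  imports Defs
begin

(* Call coordinate i essential for g on {a,b}^n if changing the i-th argument can change
   the value of g. Any g is determined by its set E of essential coordinates together with
   its values on the 2^|E| tuples that are constantly a outside E. For a term operation t,
   strong abelianness of alpha (with a alpha b) shows that t separates any two tuples that
   differ at an essential coordinate, so t is injective on those 2^|E| tuples and
   2^|E| <= |A|, i.e. |E| <= k = floor (log 2 |A|). Hence |F_ab(n)| is at most the number
   of subsets E of {0..n-1} with |E| <= k, at most (k+1) n^k, times |A|^(2^k). *)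

definition essential_coords :: "'a set \<Rightarrow> nat \<Rightarrow> ('a list \<Rightarrow> 'b) \<Rightarrow> nat set" where
  "essential_coords B n g = {i. i < n \<and> (\<exists>u\<in>tuples B n. \<exists>v\<in>B. g u \<noteq> g (u[i := v]))}"

definition pad_tuple :: "'a \<Rightarrow> nat \<Rightarrow> nat set \<Rightarrow> (nat \<Rightarrow> 'a) \<Rightarrow> 'a list" where
  "pad_tuple c n E e = map (\<lambda>i. if i \<in> E then e i else c) [0..<n]"

definition essential_table ::
    "'a \<Rightarrow> 'a set \<Rightarrow> nat \<Rightarrow> ('a list \<Rightarrow> 'b) \<Rightarrow> nat set \<times> ((nat \<Rightarrow> 'a) \<Rightarrow> 'b)" where
  "essential_table c B n g =
    (essential_coords B n g,
     \<lambda>e \<in> essential_coords B n g \<rightarrow>\<^sub>E B. g (pad_tuple c n (essential_coords B n g) e))"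

lemma length_tuples: "xs \<in> tuples B n \<Longrightarrow> length xs = n"
  by (simp add: tuples_def)

lemma nth_in_tuples: "xs \<in> tuples B n \<Longrightarrow> i < n \<Longrightarrow> xs ! i \<in> B"
  by (auto simp: tuples_def dest!: nth_mem)

lemma list_update_in_tuples: "xs \<in> tuples B n \<Longrightarrow> v \<in> B \<Longrightarrow> xs[i := v] \<in> tuples B n"
  by (auto simp: tuples_def dest: set_update_subset_insert[THEN subsetD])

lemma tuples_mono: "B \<subseteq> C \<Longrightarrow> tuples B n \<subseteq> tuples C n"
  by (auto simp: tuples_def)

lemma essential_coords_subset: "essential_coords B n g \<subseteq> {..<n}"
  by (auto simp: essential_coords_def)

lemma essential_coords_restrict:
  "essential_coords B n (restrict g (tuples B n)) = essential_coords B n g"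
  by (auto simp: essential_coords_def list_update_in_tuples)

lemma pad_tuple_in_tuples: "c \<in> B \<Longrightarrow> e \<in> E \<rightarrow>\<^sub>E B \<Longrightarrow> pad_tuple c n E e \<in> tuples B n"
  by (auto simp: pad_tuple_def tuples_def)

lemma nth_pad_tuple: "i < n \<Longrightarrow> pad_tuple c n E e ! i = (if i \<in> E then e i else c)"
  by (simp add: pad_tuple_def)

lemma eq_if_agree_on_essential_coords:
  assumes x: "x \<in> tuples B n" and y: "y \<in> tuples B n"
    and agree: "\<forall>i\<in>essential_coords B n g. x ! i = y ! i"
  shows "g x = g y"
proof -
  have "g x = g y" if "x \<in> tuples B n" "\<forall>i\<in>essential_coords B n g. x ! i = y ! i"
      "\<forall>i. m \<le> i \<and> i < n \<longrightarrow> x ! i = y ! i" for m x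
    using that
  proof (induction m arbitrary: x)
    case 0
    then show ?case
      using y by (intro arg_cong[where f = g] nth_equalityI) (auto simp: length_tuples)
  next
    case (Suc m)
    show ?case
    proof (cases "m < n")
      case False
      then show ?thesis using Suc by (simp add: not_less_eq_eq)
    next
      case True
      let ?x' = "x[m := y ! m]"
      have x': "?x' \<in> tuples B n"
        using Suc.prems(1) True nth_in_tuples[OF y] by (simp add: list_update_in_tuples)
      have "?x' ! i = y ! i" if "i \<in> essential_coords B n g \<or> m \<le> i \<and> i < n" for i
        using that Suc.prems(2,3) True essential_coords_subset[of B n g]
        by (cases "i = m") (auto simp: length_tuples[OF Suc.prems(1)])
      then have "g ?x' = g y"
        using x' by (intro Suc.IH) auto
      moreover have "g x = g ?x'"
      proof (cases "m \<in> essential_coords B n g")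
        case True
        then show ?thesis using Suc.prems(2) by (metis list_update_id)
      next
        case False
        then show ?thesis
          using Suc.prems(1) \<open>m < n\<close> nth_in_tuples[OF y] by (auto simp: essential_coords_def)
      qed
      ultimately show ?thesis by simp
    qed
  qed
  from this[of x n] x agree show ?thesis by (meson leD)
qed

lemma inj_on_essential_table:
  assumes c: "c \<in> B" and ext: "G \<subseteq> extensional (tuples B n)"
  shows "inj_on (essential_table c B n) G"
proof (rule inj_onI)
  fix g h assume g: "g \<in> G" and h: "h \<in> G"
  let ?E = "essential_coords B n g"
  assume "essential_table c B n g = essential_table c B n h"
  then have same_coords: "essential_coords B n h = ?E"
    and same_values: "\<And>e. e \<in> ?E \<rightarrow>\<^sub>E B \<Longrightarrow> g (pad_tuple c n ?E e) = h (pad_tuple c n ?E e)"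
    by (auto simp: essential_table_def dest: fun_cong[where x = e for e] split: if_splits)
  show "g = h"
  proof
    fix x
    show "g x = h x"
    proof (cases "x \<in> tuples B n")
      case True
      let ?e = "restrict (nth x) ?E"
      have e: "?e \<in> ?E \<rightarrow>\<^sub>E B"
        using True essential_coords_subset[of B n g] by (auto intro: nth_in_tuples)
      have agree: "\<forall>i\<in>?E. x ! i = pad_tuple c n ?E ?e ! i"
        using essential_coords_subset[of B n g] by (auto simp: nth_pad_tuple)
      have "g x = g (pad_tuple c n ?E ?e)"
        using True pad_tuple_in_tuples[OF c e] agree by (rule eq_if_agree_on_essential_coords)
      also have "\<dots> = h (pad_tuple c n ?E ?e)"
        using e by (rule same_values)
      also have "\<dots> = h x"
        using eq_if_agree_on_essential_coords[OF True pad_tuple_in_tuples[OF c e], of h] agree same_coords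
        by simp
      finally show ?thesis .
    next
      case False
      then show ?thesis using g h ext by (metis extensional_arb subsetD)
    qed
  qed
qed

lemma card_le_by_essential_coords:
  assumes fin_A: "finite A" and A: "A \<noteq> {}" and fin_B: "finite B" and c: "c \<in> B"
    and ext: "G \<subseteq> extensional (tuples B n)"
    and maps: "\<And>g. g \<in> G \<Longrightarrow> g ` tuples B n \<subseteq> A"
    and few_coords: "\<And>g. g \<in> G \<Longrightarrow> card (essential_coords B n g) \<le> k"
  shows "card G \<le> card {E. E \<subseteq> {..<n} \<and> card E \<le> k} * card A ^ (card B ^ k)"
proof -
  let ?I = "{E. E \<subseteq> {..<n} \<and> card E \<le> k}"
  let ?S = "SIGMA E:?I. (E \<rightarrow>\<^sub>E B) \<rightarrow>\<^sub>E A"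
  have fin_I: "finite ?I"
    by (rule finite_subset[of _ "Pow {..<n}"]) auto
  have fin_E: "finite E" if "E \<in> ?I" for E
    using that by (auto intro: finite_subset[OF _ finite_lessThan])
  have fin_fibres: "\<forall>E\<in>?I. finite ((E \<rightarrow>\<^sub>E B) \<rightarrow>\<^sub>E A)"
    using fin_E fin_A fin_B by (simp add: finite_PiE)
  have "essential_table c B n ` G \<subseteq> ?S"
  proof (rule image_subsetI)
    fix g assume g: "g \<in> G"
    let ?E = "essential_coords B n g"
    have "g (pad_tuple c n ?E e) \<in> A" if "e \<in> ?E \<rightarrow>\<^sub>E B" for e
      using maps[OF g] pad_tuple_in_tuples[OF c that] by blast
    then show "essential_table c B n g \<in> ?S"
      using few_coords[OF g] essential_coords_subset[of B n g] by (auto simp: essential_table_def)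
  qed
  with inj_on_essential_table[OF c ext] have "card G \<le> card ?S"
    using finite_SigmaI[OF fin_I bspec[OF fin_fibres]] by (rule card_inj_on_le)
  also have "\<dots> = (\<Sum>E\<in>?I. card ((E \<rightarrow>\<^sub>E B) \<rightarrow>\<^sub>E A))"
    using fin_I fin_fibres by (rule card_SigmaI)
  also have "\<dots> = (\<Sum>E\<in>?I. card A ^ (card B ^ card E))"
  proof (rule sum.cong[OF refl])
    fix E assume "E \<in> ?I"
    then have "finite E" by (rule fin_E)
    then show "card ((E \<rightarrow>\<^sub>E B) \<rightarrow>\<^sub>E A) = card A ^ (card B ^ card E)"
      using fin_B by (simp add: card_funcsetE finite_PiE)
  qed
  also have "\<dots> \<le> (\<Sum>E\<in>?I. card A ^ (card B ^ k))"
  proof (rule sum_mono)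
    fix E assume "E \<in> ?I"
    moreover have "1 \<le> card B" "1 \<le> card A"
      using fin_A A fin_B c by (auto simp: Suc_le_eq card_gt_0_iff)
    ultimately show "card A ^ (card B ^ card E) \<le> card A ^ (card B ^ k)"
      by (simp add: power_increasing)
  qed
  finally show ?thesis by simp
qed

lemma card_subsets_card_le:
  assumes "1 \<le> n"
  shows "card {E. E \<subseteq> {..<n} \<and> card E \<le> k} \<le> (k + 1) * n ^ k"
proof -
  have "{E. E \<subseteq> {..<n} \<and> card E \<le> k} = (\<Union>j\<in>{..k}. {E. E \<subseteq> {..<n} \<and> card E = j})"
    by auto
  then have "card {E. E \<subseteq> {..<n} \<and> card E \<le> k} \<le> (\<Sum>j\<in>{..k}. card {E. E \<subseteq> {..<n} \<and> card E = j})"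
    by (simp add: card_UN_le)
  also have "\<dots> = (\<Sum>j\<in>{..k}. n choose j)"
    by (simp add: n_subsets)
  also have "\<dots> \<le> (\<Sum>j\<in>{..k}. n ^ k)"
  proof (rule sum_mono)
    fix j assume "j \<in> {..k}"
    have "n choose j \<le> n ^ j"
      by (cases "j \<le> n") (auto simp: binomial_le_pow binomial_eq_0)
    also have "\<dots> \<le> n ^ k"
      using \<open>j \<in> {..k}\<close> assms by (intro power_increasing) auto
    finally show "n choose j \<le> n ^ k" .
  qed
  finally show ?thesis by simp
qed

lemma Clo_reindex:
  assumes "t \<in> Clo ar op n" and "\<And>j. j < n \<Longrightarrow> \<sigma> j < m"
  shows "(\<lambda>xs. t (map (\<lambda>j. xs ! \<sigma> j) [0..<n])) \<in> Clo ar op m"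
  using assms
proof (induction rule: Clo.induct)
  case (proj i)
  then show ?case using Clo.proj[of "\<sigma> i" m ar op] by simp
next
  case (comp ts f)
  let ?reindex = "\<lambda>t xs. t (map (\<lambda>j. xs ! \<sigma> j) [0..<n])"
  have "(\<lambda>xs. op f (map (\<lambda>t. t xs) (map ?reindex ts))) \<in> Clo ar op m"
    using comp by (intro Clo.comp) auto
  then show ?case by (simp add: comp_def)
qed

lemma Clo_maps_tuples:
  assumes "is_algebra A ar op" and "t \<in> Clo ar op n" and "xs \<in> tuples A n"
  shows "t xs \<in> A"
  using assms(2,3)
proof (induction rule: Clo.induct)
  case (proj i)
  then show ?case by (simp add: nth_in_tuples)
next
  case (comp ts f)
  then have "set (map (\<lambda>t. t xs) ts) \<subseteq> A" by auto
  with assms(1) comp(1) show ?case by (simp add: is_algebra_def)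
qed

definition swap_coords :: "nat \<Rightarrow> nat \<Rightarrow> 'a list \<Rightarrow> 'a list" where
  "swap_coords n i xs = map (\<lambda>j. xs ! (if j = 0 then i else if j = i then 0 else j)) [0..<n]"

lemma length_swap_coords [simp]: "length (swap_coords n i xs) = n"
  by (simp add: swap_coords_def)

lemma nth_swap_coords:
  "j < n \<Longrightarrow> swap_coords n i xs ! j = xs ! (if j = 0 then i else if j = i then 0 else j)"
  by (simp add: swap_coords_def)

lemma swap_coords_swap_coords:
  assumes "i < n" and "length xs = n"
  shows "swap_coords n i (swap_coords n i xs) = xs"
  using assms by (intro nth_equalityI) (auto simp: nth_swap_coords)

lemma swap_coords_in_tuples:
  assumes "i < n" and "xs \<in> tuples A n"
  shows "swap_coords n i xs \<in> tuples A n"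
proof -
  have "xs ! (if j = 0 then i else if j = i then 0 else j) \<in> A" if "j < n" for j
    using assms that by (intro nth_in_tuples) auto
  then show ?thesis by (auto simp: swap_coords_def tuples_def)
qed

lemma Clo_swap_coords:
  assumes "i < n" and "t \<in> Clo ar op n"
  shows "t \<circ> swap_coords n i \<in> Clo ar op n"
  unfolding comp_def swap_coords_def using assms(2) by (rule Clo_reindex) (use assms(1) in simp)

lemma swap_coords_list_update:
  assumes "i < n" and "length w = n" and "length z = n"
  shows "swap_coords n i w ! 0 # tl (swap_coords n i z) = swap_coords n i (z[i := w ! i])"
proof (rule nth_equalityI)
  show "length (swap_coords n i w ! 0 # tl (swap_coords n i z)) =
    length (swap_coords n i (z[i := w ! i]))"
    using assms(1) by simp
  fix j assume "j < length (swap_coords n i w ! 0 # tl (swap_coords n i z))"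
  then have j: "j < n" using assms(1) by simp
  show "(swap_coords n i w ! 0 # tl (swap_coords n i z)) ! j = swap_coords n i (z[i := w ! i]) ! j"
  proof (cases j)
    case 0
    have "0 < n" using assms(1) by simp
    with 0 show ?thesis using assms by (simp add: nth_swap_coords)
  next
    case (Suc j')
    then have "tl (swap_coords n i z) ! j' = swap_coords n i z ! j" using j by (simp add: nth_tl)
    then show ?thesis using Suc j assms by (auto simp: nth_swap_coords)
  qed
qed

lemma strongly_abelian_update:
  assumes sa: "strongly_abelian A ar op \<alpha>" and t: "t \<in> Clo ar op n" and i: "i < n"
    and x: "x \<in> tuples A n" and y: "y \<in> tuples A n" and z: "z \<in> tuples A n"
    and xy: "\<forall>j<n. (x ! j, y ! j) \<in> \<alpha>" and yz: "\<forall>j<n. j \<noteq> i \<longrightarrow> (y ! j, z ! j) \<in> \<alpha>"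
    and eq: "t x = t y"
  shows "t (z[i := x ! i]) = t (z[i := y ! i])"
proof -
  \<comment> \<open>The definition only speaks about coordinate 0; conjugating t by the transposition
    of 0 and i moves it to coordinate i.\<close>
  let ?s = "swap_coords n i :: 'a list \<Rightarrow> 'a list"
  have len: "length x = n" "length y = n" "length z = n"
    using x y z by (simp_all add: length_tuples)
  have n: "1 \<le> n" using i by simp
  have "(t \<circ> ?s) (?s x ! 0 # tl (?s z)) = (t \<circ> ?s) (?s y ! 0 # tl (?s z))"
  proof (rule sa[unfolded strongly_abelian_def, rule_format, OF n Clo_swap_coords[OF i t]], intro conjI)
    show "?s x \<in> tuples A n" "?s y \<in> tuples A n" "?s z \<in> tuples A n"
      using i x y z by (simp_all add: swap_coords_in_tuples)
    show "\<forall>j<n. (?s x ! j, ?s y ! j) \<in> \<alpha>"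
      using i xy by (simp add: nth_swap_coords)
    show "\<forall>j. 1 \<le> j \<and> j < n \<longrightarrow> (?s y ! j, ?s z ! j) \<in> \<alpha>"
      using i yz by (auto simp: nth_swap_coords)
    show "(t \<circ> ?s) (?s x) = (t \<circ> ?s) (?s y)"
      using i eq len by (simp add: swap_coords_swap_coords)
  qed
  then show ?thesis
    using i len by (simp add: swap_coords_list_update swap_coords_swap_coords)
qed

lemma agree_on_essential_coords_if_eq:
  assumes sa: "strongly_abelian A ar op \<alpha>" and t: "t \<in> Clo ar op n"
    and ab: "a \<in> A" "b \<in> A" and ab_\<alpha>: "{a, b} \<times> {a, b} \<subseteq> \<alpha>"
    and x: "x \<in> tuples {a, b} n" and y: "y \<in> tuples {a, b} n" and eq: "t x = t y"
    and i: "i \<in> essential_coords {a, b} n t"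
  shows "x ! i = y ! i"
proof (rule ccontr)
  assume neq: "x ! i \<noteq> y ! i"
  from i obtain u v where "i < n" and u: "u \<in> tuples {a, b} n" and v: "v \<in> {a, b}"
    and essential: "t u \<noteq> t (u[i := v])"
    unfolding essential_coords_def by blast
  have related: "(p ! j, q ! j) \<in> \<alpha>" if "p \<in> tuples {a, b} n" "q \<in> tuples {a, b} n" "j < n" for p q j
    using ab_\<alpha> nth_in_tuples[OF that(1,3)] nth_in_tuples[OF that(2,3)] by blast
  have in_A: "p \<in> tuples A n" if "p \<in> tuples {a, b} n" for p
    using that ab tuples_mono[of "{a, b}" A n] by auto
  \<comment> \<open>Strong abelianness transports the equation from x, y to the essentiality witness u.\<close>
  have same: "t (u[i := x ! i]) = t (u[i := y ! i])"
    using related[OF x y] related[OF y u]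
    by (intro strongly_abelian_update[OF sa t \<open>i < n\<close> in_A[OF x] in_A[OF y] in_A[OF u] _ _ eq]) auto
  have "u ! i \<noteq> v"
    using essential by (metis list_update_id)
  then have "{x ! i, y ! i} = {u ! i, v}"
    using neq v nth_in_tuples[OF x \<open>i < n\<close>] nth_in_tuples[OF y \<open>i < n\<close>]
      nth_in_tuples[OF u \<open>i < n\<close>]
    by auto
  then consider "x ! i = u ! i" "y ! i = v" | "x ! i = v" "y ! i = u ! i"
    by (auto simp: doubleton_eq_iff)
  then show False
    using same essential by cases simp_all
qed

lemma two_pow_card_essential_coords_le:
  assumes alg: "is_algebra A ar op" and fin_A: "finite A" and sa: "strongly_abelian A ar op \<alpha>"
    and ab: "a \<in> A" "b \<in> A" and ab_\<alpha>: "{a, b} \<times> {a, b} \<subseteq> \<alpha>" and t: "t \<in> Clo ar op n"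
  shows "2 ^ card (essential_coords {a, b} n t) \<le> card A"
proof (cases "a = b")
  case True
  have "u[i := v] = u" if "u \<in> tuples {a, b} n" "i < n" "v \<in> {a, b}" for u i v
  proof -
    have "u ! i = v" using True nth_in_tuples[OF that(1,2)] that(3) by simp
    then show ?thesis by (metis list_update_id)
  qed
  then have "essential_coords {a, b} n t = {}"
    by (auto simp: essential_coords_def)
  moreover have "0 < card A"
    using fin_A ab(1) card_gt_0_iff by blast
  ultimately show ?thesis by simp
next
  case False
  let ?E = "essential_coords {a, b} n t"
  have fin_E: "finite ?E"
    by (rule finite_subset[OF essential_coords_subset]) simp
  have pad_in_A: "pad_tuple a n ?E e \<in> tuples A n" if "e \<in> ?E \<rightarrow>\<^sub>E {a, b}" for e
    using pad_tuple_in_tuples[OF insertI1 that] tuples_mono[of "{a, b}" A n] ab by auto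
  have "inj_on (\<lambda>e. t (pad_tuple a n ?E e)) (?E \<rightarrow>\<^sub>E {a, b})"
  proof (rule inj_onI)
    fix e e' assume e: "e \<in> ?E \<rightarrow>\<^sub>E {a, b}" and e': "e' \<in> ?E \<rightarrow>\<^sub>E {a, b}"
      and eq: "t (pad_tuple a n ?E e) = t (pad_tuple a n ?E e')"
    show "e = e'"
    proof (rule PiE_ext[OF e e'])
      fix i assume i: "i \<in> ?E"
      then have "i < n" using essential_coords_subset by blast
      have "pad_tuple a n ?E e ! i = pad_tuple a n ?E e' ! i"
        using pad_tuple_in_tuples[OF _ e] pad_tuple_in_tuples[OF _ e']
        by (intro agree_on_essential_coords_if_eq[OF sa t ab ab_\<alpha> _ _ eq i]) simp_all
      with i \<open>i < n\<close> show "e i = e' i" by (simp add: nth_pad_tuple)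
    qed
  qed
  moreover have "(\<lambda>e. t (pad_tuple a n ?E e)) ` (?E \<rightarrow>\<^sub>E {a, b}) \<subseteq> A"
    using Clo_maps_tuples[OF alg t pad_in_A] by blast
  ultimately have "card (?E \<rightarrow>\<^sub>E {a, b}) \<le> card A"
    using fin_A by (rule card_inj_on_le)
  then show ?thesis
    using fin_E False by (simp add: card_funcsetE numeral_2_eq_2)
qed

lemma le_nat_floor_log2: "2 ^ c \<le> m \<Longrightarrow> c \<le> nat \<lfloor>log 2 (real m)\<rfloor>"
  using le_log2_of_power[of c m] by (simp add: le_floor_iff le_nat_iff)

lemma card_F_ab_le:
  fixes A :: "'a set" and k :: nat
  defines "k \<equiv> nat \<lfloor>log 2 (real (card A))\<rfloor>"
  assumes alg: "is_algebra A ar op" and fin_A: "finite A" and sa: "strongly_abelian A ar op \<alpha>"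
    and ab: "a \<in> A" "b \<in> A" and ab_\<alpha>: "{a, b} \<times> {a, b} \<subseteq> \<alpha>"
  shows "card (F_ab ar op a b n) \<le> card {E. E \<subseteq> {..<n} \<and> card E \<le> k} * card A ^ (2 ^ k)"
proof -
  have "card (F_ab ar op a b n) \<le> card {E. E \<subseteq> {..<n} \<and> card E \<le> k} * card A ^ (card {a, b} ^ k)"
  proof (rule card_le_by_essential_coords[OF fin_A _ _ insertI1])
    show "A \<noteq> {}" using ab by blast
    show "finite {a, b}" by simp
    show "F_ab ar op a b n \<subseteq> extensional (tuples {a, b} n)"
      by (auto simp: F_ab_def)
    fix g assume "g \<in> F_ab ar op a b n"
    then obtain t where t: "t \<in> Clo ar op n" and g: "g = restrict t (tuples {a, b} n)"
      by (auto simp: F_ab_def)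
    show "g ` tuples {a, b} n \<subseteq> A"
      using Clo_maps_tuples[OF alg t] tuples_mono[of "{a, b}" A n] ab by (auto simp: g)
    have "2 ^ card (essential_coords {a, b} n g) \<le> card A"
      using two_pow_card_essential_coords_le[OF alg fin_A sa ab ab_\<alpha> t]
      by (simp add: g essential_coords_restrict)
    then show "card (essential_coords {a, b} n g) \<le> k"
      unfolding k_def by (rule le_nat_floor_log2)
  qed
  also have "\<dots> \<le> card {E. E \<subseteq> {..<n} \<and> card E \<le> k} * card A ^ (2 ^ k)"
  proof (intro mult_left_mono power_increasing power_mono)
    show "card {a, b} \<le> 2" by (simp add: card_insert_le_m1)
    show "1 \<le> card A" using fin_A ab by (auto simp: Suc_le_eq card_gt_0_iff)
  qed simp_all
  finally show ?thesis .
qed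

theorem proposition3p4:
  fixes A :: "'a set" and ar :: "'f \<Rightarrow> nat" and op :: "'f \<Rightarrow> 'a list \<Rightarrow> 'a"
    and \<alpha> :: "('a \<times> 'a) set" and a b :: 'a
  assumes "is_algebra A ar op" and "finite A"
    and "is_congruence A ar op \<alpha>" and "strongly_abelian A ar op \<alpha>"
    and "a \<in> A" and "b \<in> A" and "(a, b) \<in> \<alpha>"
  shows "(\<lambda>n. real (card (F_ab ar op a b n)))
           \<in> O(\<lambda>n. real n ^ nat \<lfloor>log 2 (real (card A))\<rfloor>)"
proof -
  define k where "k = nat \<lfloor>log 2 (real (card A))\<rfloor>"
  define C where "C = (k + 1) * card A ^ (2 ^ k)"
  have "equiv A \<alpha>" using assms(3) by (simp add: is_congruence_def)
  then have ab_\<alpha>: "{a, b} \<times> {a, b} \<subseteq> \<alpha>"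
    using assms(5-7) by (auto elim: equivE dest: refl_onD symD)
  have bound: "card (F_ab ar op a b n) \<le> C * n ^ k" if "1 \<le> n" for n
  proof -
    have "card (F_ab ar op a b n) \<le> card {E. E \<subseteq> {..<n} \<and> card E \<le> k} * card A ^ (2 ^ k)"
      unfolding k_def by (rule card_F_ab_le[OF assms(1,2,4-6) ab_\<alpha>])
    also have "\<dots> \<le> (k + 1) * n ^ k * card A ^ (2 ^ k)"
      using card_subsets_card_le[OF that] by (rule mult_right_mono) simp
    finally show ?thesis by (simp add: C_def algebra_simps)
  qed
  have "\<forall>\<^sub>F n in at_top. norm (real (card (F_ab ar op a b n))) \<le> real C * norm (real n ^ k)"
    using eventually_ge_at_top[of "1::nat"]
  proof eventually_elim
    case (elim n)
    then have "real (card (F_ab ar op a b n)) \<le> real (C * n ^ k)"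
      using bound by (simp only: of_nat_le_iff)
    then show ?case by simp
  qed
  then show ?thesis unfolding k_def by (rule bigoI)
qed

end
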